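(* Let $n\ge 2$, $b>0$, and let $p_0,\dots,p_{n-2}$ be complex-valued, $C^\infty$, $b$-periodic functions on $\mathbb{R}$; let $\mathcal{L}u := u^{(n)}+\sum_{k=0}^{n-2}p_k(x)u^{(k)}$. If $\psi$ is an eigenfunction of the multipoint problem $$\mathcal{L}u=\lambda u,\qquad u(0)=u(b)=\cdots=u((n-1)b)=0$$ (i.e. a nontrivial solution for some $\lambda\in\mathbb{C}$), then $\psi(kb)=0$ for all $k\in\mathbb{Z}$. *)

theory Defs
  imports "HOL-Analysis.Analysis"
begin

definition hderiv :: "nat \<Rightarrow> (real \<Rightarrow> complex) \<Rightarrow> real \<Rightarrow> complex" where
  "hderiv k f = ((\<lambda>g x. vector_derivative g (at x)) ^^ k) f"

definition k_times_differentiable :: "nat \<Rightarrow> (real \<Rightarrow> complex) \<Rightarrow> bool" where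
  "k_times_differentiable k f \<longleftrightarrow>
     (\<forall>j<k. \<forall>x. (hderiv j f has_vector_derivative hderiv (Suc j) f x) (at x))"

definition smooth_fun :: "(real \<Rightarrow> complex) \<Rightarrow> bool" where
  "smooth_fun f \<longleftrightarrow> (\<forall>k. k_times_differentiable k f)"

end

theory Submission
  imports Defs "Jordan_Normal_Form.Determinant"
begin

text \<open>
  By periodicity of the coefficients, the \<open>n + 1\<close> translates \<open>\<psi> (x + j b)\<close>, \<open>j = 0, \<dots>, n\<close>,
  solve the same equation. A solution whose first \<open>n\<close> derivatives vanish at \<open>0\<close> vanishes
  identically (a Gronwall estimate for the energy \<open>\<Sum>k<n. \<bar>hderiv k u x\<bar>\<^sup>2\<close>), so the solution
  space has dimension at most \<open>n\<close> and some nontrivial combination \<open>\<Sum>j. c j \<psi> (x + j b)\<close>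
  vanishes identically. At \<open>x = t b\<close> this is a linear recurrence for \<open>\<psi> (t b)\<close>, \<open>t \<in> \<int>\<close>, of
  order at most \<open>n\<close>, and the \<open>n\<close> consecutive zeros \<open>\<psi> 0 = \<dots> = \<psi> ((n - 1) b) = 0\<close>
  propagate in both directions.
\<close>

lemma hderiv_0 [simp]: "hderiv 0 f = f"
  by (simp add: hderiv_def)

lemma hderiv_Suc: "hderiv (Suc k) f x = vector_derivative (hderiv k f) (at x)"
  by (simp add: hderiv_def)

lemma hderiv_tower:
  assumes "F 0 = f" and "\<And>j x. j < m \<Longrightarrow> (F j has_vector_derivative F (Suc j) x) (at x)"
    and "k \<le> m"
  shows "hderiv k f = F k"
  using \<open>k \<le> m\<close>
proof (induction k)
  case 0
  show ?case using assms(1) by simp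
next
  case (Suc k)
  then have IH: "hderiv k f = F k" by simp
  show ?case
  proof
    fix x
    show "hderiv (Suc k) f x = F (Suc k) x"
      using assms(2)[of k x] Suc.prems by (simp add: IH hderiv_Suc vector_derivative_at)
  qed
qed

lemma k_times_differentiable_tower:
  assumes "F 0 = f" and "\<And>j x. j < m \<Longrightarrow> (F j has_vector_derivative F (Suc j) x) (at x)"
  shows "k_times_differentiable m f"
  using assms hderiv_tower[OF assms] unfolding k_times_differentiable_def
  by (metis Suc_leI less_imp_le)

lemma k_times_differentiable_imp_continuous:
  assumes "k_times_differentiable (Suc m) f"
  shows "continuous_on UNIV f"
proof (rule continuous_on_vector_derivative)
  fix x
  show "(f has_vector_derivative hderiv 1 f x) (at x)"
    using assms unfolding k_times_differentiable_def by (metis One_nat_def hderiv_0 zero_less_Suc)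
qed

lemma has_vector_derivative_translate:
  assumes "(f has_vector_derivative f') (at (x + c))"
  shows "((\<lambda>y. f (y + c)) has_vector_derivative f') (at x)"
proof -
  have "((\<lambda>y. y + c) has_vector_derivative 1) (at x)"
    by (auto intro!: derivative_eq_intros)
  from vector_diff_chain_at[OF this, of f] assms show ?thesis
    by (simp add: o_def)
qed

lemma
  assumes "k_times_differentiable m f"
  shows k_times_differentiable_translate: "k_times_differentiable m (\<lambda>x. f (x + c))"
    and hderiv_translate: "k \<le> m \<Longrightarrow> hderiv k (\<lambda>x. f (x + c)) = (\<lambda>x. hderiv k f (x + c))"
proof -
  have tower: "((\<lambda>y. hderiv j f (y + c)) has_vector_derivative hderiv (Suc j) f (x + c)) (at x)"
    if "j < m" for j x
    using assms that unfolding k_times_differentiable_def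
    by (intro has_vector_derivative_translate) blast
  show "k_times_differentiable m (\<lambda>x. f (x + c))"
    by (rule k_times_differentiable_tower[where F = "\<lambda>j x. hderiv j f (x + c)"]) (simp_all add: tower)
  show "k \<le> m \<Longrightarrow> hderiv k (\<lambda>x. f (x + c)) = (\<lambda>x. hderiv k f (x + c))"
    by (rule hderiv_tower[where F = "\<lambda>j x. hderiv j f (x + c)"]) (simp_all add: tower)
qed

lemma
  assumes "finite S" and "\<And>j. j \<in> S \<Longrightarrow> k_times_differentiable m (\<phi> j)"
  shows k_times_differentiable_sum:
      "k_times_differentiable m (\<lambda>x. \<Sum>j\<in>S. c j * \<phi> j x)"
    and hderiv_sum:
      "k \<le> m \<Longrightarrow> hderiv k (\<lambda>x. \<Sum>j\<in>S. c j * \<phi> j x) = (\<lambda>x. \<Sum>j\<in>S. c j * hderiv k (\<phi> j) x)"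
proof -
  have tower: "((\<lambda>y. \<Sum>j\<in>S. c j * hderiv i (\<phi> j) y) has_vector_derivative
          (\<Sum>j\<in>S. c j * hderiv (Suc i) (\<phi> j) x)) (at x)" if "i < m" for i x
    using assms(2) that unfolding k_times_differentiable_def
    by (intro has_vector_derivative_sum has_vector_derivative_mult_right) blast
  show "k_times_differentiable m (\<lambda>x. \<Sum>j\<in>S. c j * \<phi> j x)"
    by (rule k_times_differentiable_tower[where F = "\<lambda>i x. \<Sum>j\<in>S. c j * hderiv i (\<phi> j) x"])
      (simp_all add: tower)
  show "k \<le> m \<Longrightarrow> hderiv k (\<lambda>x. \<Sum>j\<in>S. c j * \<phi> j x) = (\<lambda>x. \<Sum>j\<in>S. c j * hderiv k (\<phi> j) x)"
    by (rule hderiv_tower[where F = "\<lambda>i x. \<Sum>j\<in>S. c j * hderiv i (\<phi> j) x"])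
      (simp_all add: tower)
qed

definition ode_solution :: "nat \<Rightarrow> (nat \<Rightarrow> real \<Rightarrow> complex) \<Rightarrow> complex \<Rightarrow> (real \<Rightarrow> complex) \<Rightarrow> bool"
  where "ode_solution n p lam u \<longleftrightarrow> k_times_differentiable n u \<and>
    (\<forall>x. hderiv n u x + (\<Sum>k\<le>n - 2. p k x * hderiv k u x) = lam * u x)"

lemma ode_solution_translate:
  assumes "ode_solution n p lam u" and "\<And>k x. k \<le> n - 2 \<Longrightarrow> p k (x + c) = p k x"
  shows "ode_solution n p lam (\<lambda>x. u (x + c))"
proof -
  have d: "k_times_differentiable n u" and ode: "\<And>x. hderiv n u x + (\<Sum>k\<le>n - 2. p k x * hderiv k u x) = lam * u x"
    using assms(1) by (auto simp: ode_solution_def)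
  have "(\<Sum>k\<le>n - 2. p k x * hderiv k (\<lambda>x. u (x + c)) x) = (\<Sum>k\<le>n - 2. p k (x + c) * hderiv k u (x + c))" for x
    using assms(2) by (intro sum.cong) (simp_all add: hderiv_translate[OF d])
  then show ?thesis
    using ode[of "x + c" for x] by (simp add: ode_solution_def k_times_differentiable_translate[OF d] hderiv_translate[OF d])
qed

lemma ode_solution_sum:
  assumes "finite S" and "\<And>j. j \<in> S \<Longrightarrow> ode_solution n p lam (\<phi> j)"
  shows "ode_solution n p lam (\<lambda>x. \<Sum>j\<in>S. c j * \<phi> j x)"
proof -
  have d: "\<And>j. j \<in> S \<Longrightarrow> k_times_differentiable n (\<phi> j)"
    using assms(2) by (simp add: ode_solution_def)
  have "hderiv n (\<lambda>x. \<Sum>j\<in>S. c j * \<phi> j x) x + (\<Sum>k\<le>n - 2. p k x * hderiv k (\<lambda>x. \<Sum>j\<in>S. c j * \<phi> j x) x)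
      = (\<Sum>j\<in>S. c j * (hderiv n (\<phi> j) x + (\<Sum>k\<le>n - 2. p k x * hderiv k (\<phi> j) x)))" for x
    by (simp add: hderiv_sum[OF assms(1) d] sum.distrib sum_distrib_left algebra_simps sum.swap[of _ S])
  also have "\<dots> x = lam * (\<Sum>j\<in>S. c j * \<phi> j x)" for x
    using assms(2) by (simp add: ode_solution_def sum_distrib_left algebra_simps)
  finally show ?thesis
    by (simp add: ode_solution_def k_times_differentiable_sum[OF assms(1) d])
qed

lemma gronwall_zero_right:
  fixes E E' :: "real \<Rightarrow> real"
  assumes "0 \<le> x" and "E 0 = 0" and nonneg: "\<And>y. y \<in> {0..x} \<Longrightarrow> 0 \<le> E y"
    and deriv: "\<And>y. y \<in> {0..x} \<Longrightarrow> (E has_real_derivative E' y) (at y)"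
    and bound: "\<And>y. y \<in> {0..x} \<Longrightarrow> E' y \<le> K * E y"
  shows "E x = 0"
proof -
  have "E x * exp (- K * x) \<le> E 0 * exp (- K * 0)"
  proof (rule deriv_nonpos_imp_antimono[where g = "\<lambda>y. E y * exp (- K * y)"])
    fix y assume y: "y \<in> {0..x}"
    show "((\<lambda>y. E y * exp (- K * y)) has_real_derivative (E' y - K * E y) * exp (- K * y)) (at y)"
      using deriv[OF y] by (auto intro!: derivative_eq_intros simp: algebra_simps)
    show "(E' y - K * E y) * exp (- K * y) \<le> 0"
      using bound[OF y] by (simp add: mult_nonpos_nonneg)
  qed fact
  then show ?thesis
    using \<open>E 0 = 0\<close> nonneg[of x] \<open>0 \<le> x\<close> by (simp add: mult_le_0_iff)
qed

lemma gronwall_zero: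
  fixes E E' :: "real \<Rightarrow> real"
  assumes "E 0 = 0" and nonneg: "\<And>y. y \<in> {-\<bar>x\<bar>..\<bar>x\<bar>} \<Longrightarrow> 0 \<le> E y"
    and deriv: "\<And>y. y \<in> {-\<bar>x\<bar>..\<bar>x\<bar>} \<Longrightarrow> (E has_real_derivative E' y) (at y)"
    and bound: "\<And>y. y \<in> {-\<bar>x\<bar>..\<bar>x\<bar>} \<Longrightarrow> \<bar>E' y\<bar> \<le> K * E y"
  shows "E x = 0"
proof (cases "0 \<le> x")
  case True
  show ?thesis
    by (rule gronwall_zero_right[where E = E and E' = E' and K = K])
      (use True \<open>E 0 = 0\<close> nonneg deriv bound in \<open>auto simp: abs_le_iff\<close>)
next
  case False
  have "E (- (- x)) = 0"
  proof (rule gronwall_zero_right[where E = "\<lambda>y. E (- y)" and E' = "\<lambda>y. - E' (- y)" and K = K])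
    fix y assume y: "y \<in> {0..- x}"
    then have "- y \<in> {-\<bar>x\<bar>..\<bar>x\<bar>}"
      using False by auto
    then show "0 \<le> E (- y)" and "- E' (- y) \<le> K * E (- y)"
      and "((\<lambda>y. E (- y)) has_real_derivative - E' (- y)) (at y)"
      using nonneg deriv bound by (auto simp: DERIV_mirror[symmetric] abs_le_iff)
  qed (use False \<open>E 0 = 0\<close> in auto)
  then show ?thesis
    by simp
qed

lemma has_real_derivative_cmod_power2:
  fixes f :: "real \<Rightarrow> complex"
  assumes "(f has_vector_derivative f') (at y)"
  shows "((\<lambda>y. (cmod (f y))\<^sup>2) has_real_derivative 2 * Re (f' * cnj (f y))) (at y)"
proof -
  have "((\<lambda>y. f y * cnj (f y)) has_vector_derivative f y * cnj f' + f' * cnj (f y)) (at y)"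
    by (intro has_vector_derivative_mult has_vector_derivative_cnj assms)
  then have "((\<lambda>y. Re (f y * cnj (f y))) has_vector_derivative Re (f y * cnj f' + f' * cnj (f y))) (at y)"
    by (rule bounded_linear.has_vector_derivative[OF bounded_linear_Re])
  moreover have "Re (f y * cnj f' + f' * cnj (f y)) = 2 * Re (f' * cnj (f y))"
    by simp
  moreover have "(cmod z)\<^sup>2 = Re (z * cnj z)" for z
    using cmod_power2[of z] by (simp add: power2_eq_square)
  ultimately show ?thesis
    by (simp add: has_real_derivative_iff_has_vector_derivative)
qed

lemma energy_derivative_bound:
  fixes f q :: "nat \<Rightarrow> complex"
  assumes "1 \<le> n" and top: "f n = lam * f 0 - (\<Sum>k\<le>n - 2. q k * f k)"
  defines "E \<equiv> \<Sum>k<n. (cmod (f k))\<^sup>2"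
  shows "\<bar>\<Sum>k<n. 2 * Re (f (Suc k) * cnj (f k))\<bar>
    \<le> 2 * real n * (1 + (\<Sum>k\<le>n - 2. cmod (q k)) + cmod lam) * E"
proof -
  define Q where "Q = (\<Sum>k\<le>n - 2. cmod (q k))"
  define B where "B = 1 + Q + cmod lam"
  have "E \<ge> 0" and "Q \<ge> 0"
    unfolding E_def Q_def by (simp_all add: sum_nonneg)
  have low: "cmod (f k) \<le> sqrt E" if "k < n" for k
    using that unfolding E_def
    by (intro real_le_rsqrt member_le_sum) auto
  have "cmod (f n) \<le> cmod lam * cmod (f 0) + (\<Sum>k\<le>n - 2. cmod (q k) * cmod (f k))"
    unfolding top
    by (rule order_trans[OF norm_triangle_ineq4]) (auto intro!: add_mono order_trans[OF norm_sum] simp: norm_mult)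
  also have "\<dots> \<le> cmod lam * sqrt E + (\<Sum>k\<le>n - 2. cmod (q k) * sqrt E)"
    using \<open>1 \<le> n\<close> by (intro add_mono mult_left_mono sum_mono low) auto
  also have "\<dots> = (cmod lam + Q) * sqrt E"
    by (simp add: Q_def sum_distrib_right distrib_right)
  also have "\<dots> \<le> B * sqrt E"
    using \<open>E \<ge> 0\<close> by (intro mult_right_mono) (auto simp: B_def)
  finally have high: "cmod (f n) \<le> B * sqrt E" .
  have next_bound: "cmod (f (Suc k)) \<le> B * sqrt E" if "k < n" for k
  proof (cases "Suc k = n")
    case False
    then have "cmod (f (Suc k)) \<le> 1 * sqrt E"
      using low[of "Suc k"] that by simp
    also have "\<dots> \<le> B * sqrt E"
      using \<open>E \<ge> 0\<close> \<open>Q \<ge> 0\<close> by (intro mult_right_mono) (auto simp: B_def)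
    finally show ?thesis .
  qed (use high in simp)
  have product_bound: "\<bar>2 * Re (f (Suc k) * cnj (f k))\<bar> \<le> 2 * B * E" if "k < n" for k
  proof -
    have "\<bar>2 * Re (f (Suc k) * cnj (f k))\<bar> \<le> 2 * (cmod (f (Suc k)) * cmod (f k))"
      using abs_Re_le_cmod[of "f (Suc k) * cnj (f k)"] by (simp add: norm_mult)
    also have "\<dots> \<le> 2 * ((B * sqrt E) * sqrt E)"
      using next_bound[OF that] low[OF that] \<open>E \<ge> 0\<close> \<open>Q \<ge> 0\<close>
      by (intro mult_left_mono mult_mono) (auto simp: B_def)
    also have "\<dots> = 2 * B * E"
      using \<open>E \<ge> 0\<close> by (simp add: algebra_simps)
    finally show ?thesis .
  qed
  have "\<bar>\<Sum>k<n. 2 * Re (f (Suc k) * cnj (f k))\<bar> \<le> (\<Sum>k<n. \<bar>2 * Re (f (Suc k) * cnj (f k))\<bar>)"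
    by (rule sum_abs)
  also have "\<dots> \<le> (\<Sum>k<n. 2 * B * E)"
    by (intro sum_mono product_bound) simp
  also have "\<dots> = 2 * real n * (1 + (\<Sum>k\<le>n - 2. cmod (q k)) + cmod lam) * E"
    by (simp add: B_def Q_def)
  finally show ?thesis .
qed

lemma ode_solution_zero_initial:
  assumes "1 \<le> n" and continuous: "\<And>k. k \<le> n - 2 \<Longrightarrow> continuous_on UNIV (p k)"
    and sol: "ode_solution n p lam u" and init: "\<And>k. k < n \<Longrightarrow> hderiv k u 0 = 0"
  shows "u x = 0"
proof -
  have d: "k_times_differentiable n u"
    and ode: "\<And>y. hderiv n u y + (\<Sum>k\<le>n - 2. p k y * hderiv k u y) = lam * u y"
    using sol by (simp_all add: ode_solution_def)
  define E where "E y = (\<Sum>k<n. (cmod (hderiv k u y))\<^sup>2)" for y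
  define E' where "E' y = (\<Sum>k<n. 2 * Re (hderiv (Suc k) u y * cnj (hderiv k u y)))" for y
  define growth where "growth y = 2 * real n * (1 + (\<Sum>k\<le>n - 2. cmod (p k y)) + cmod lam)" for y
  have E_nonneg: "0 \<le> E y" for y
    by (simp add: E_def sum_nonneg)
  have deriv: "(E has_real_derivative E' y) (at y)" for y
    unfolding E_def E'_def using d
    by (intro DERIV_sum has_real_derivative_cmod_power2) (auto simp: k_times_differentiable_def)
  have "continuous_on {-\<bar>x\<bar>..\<bar>x\<bar>} growth"
    unfolding growth_def by (intro continuous_intros continuous_on_subset[OF continuous]) auto
  moreover have "{-\<bar>x\<bar>..\<bar>x\<bar>} \<noteq> {}"
    by simp
  ultimately obtain y0 where y0: "\<forall>y\<in>{-\<bar>x\<bar>..\<bar>x\<bar>}. growth y \<le> growth y0"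
    using continuous_attains_sup[OF compact_Icc] by blast
  have bound: "\<bar>E' y\<bar> \<le> growth y0 * E y" if "y \<in> {-\<bar>x\<bar>..\<bar>x\<bar>}" for y
  proof -
    have "hderiv n u y = lam * hderiv 0 u y - (\<Sum>k\<le>n - 2. p k y * hderiv k u y)"
      using ode[of y] by (simp add: algebra_simps eq_diff_eq)
    from energy_derivative_bound[where f = "\<lambda>k. hderiv k u y" and q = "\<lambda>k. p k y", OF \<open>1 \<le> n\<close> this]
    have "\<bar>E' y\<bar> \<le> growth y * E y"
      by (simp only: E_def E'_def growth_def)
    also have "\<dots> \<le> growth y0 * E y"
      using y0 that E_nonneg by (intro mult_right_mono) auto
    finally show ?thesis .
  qed
  have "E 0 = 0"
    using init by (simp add: E_def)
  then have "E x = 0"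
    by (rule gronwall_zero[where E' = E' and K = "growth y0"]) (simp_all add: E_nonneg deriv bound)
  moreover have "(cmod (u x))\<^sup>2 \<le> E x"
    using \<open>1 \<le> n\<close> member_le_sum[of 0 "{..<n}" "\<lambda>k. (cmod (hderiv k u x))\<^sup>2"]
    by (simp add: E_def)
  ultimately show ?thesis
    by simp
qed

lemma periodic_multiple:
  fixes f :: "real \<Rightarrow> 'a"
  assumes "\<And>x. f (x + c) = f x"
  shows "f (x + real j * c) = f x"
proof (induction j)
  case (Suc j)
  then show ?case
    using assms[of "x + real j * c"] by (simp add: algebra_simps)
qed simp

lemma underdetermined_homogeneous_system:
  fixes M :: "nat \<Rightarrow> nat \<Rightarrow> 'a::idom"
  assumes "m < n"
  obtains c where "\<exists>j<n. c j \<noteq> 0" and "\<And>i. i < m \<Longrightarrow> (\<Sum>j<n. M i j * c j) = 0"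
proof -
  define A where "A = mat\<^sub>r n n (\<lambda>i. if i = m then 0\<^sub>v n else vec n (M i))"
  have "det A = 0"
    unfolding A_def using assms by (intro det_row_0) auto
  moreover have "A \<in> carrier_mat n n"
    by (simp add: A_def)
  ultimately obtain v where v: "v \<in> carrier_vec n" "v \<noteq> 0\<^sub>v n" "A *\<^sub>v v = 0\<^sub>v n"
    using det_0_iff_vec_prod_zero by blast
  show ?thesis
  proof
    show "\<exists>j<n. v $ j \<noteq> 0"
      using v(1,2) by (metis carrier_vecD eq_vecI index_zero_vec)
    show "(\<Sum>j<n. M i j * v $ j) = 0" if "i < m" for i
    proof -
      have "(A *\<^sub>v v) $ i = 0"
        using v(3) that assms by simp
      then show ?thesis
        using v(1) that assms by (simp add: A_def scalar_prod_def atLeast0LessThan)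
    qed
  qed
qed

lemma ode_solutions_linearly_dependent:
  assumes "1 \<le> n" and continuous: "\<And>k. k \<le> n - 2 \<Longrightarrow> continuous_on UNIV (p k)"
    and solutions: "\<And>j. j \<le> n \<Longrightarrow> ode_solution n p lam (\<phi> j)"
  obtains c where "\<exists>j\<le>n. c j \<noteq> 0" and "\<And>x. (\<Sum>j\<le>n. c j * \<phi> j x) = 0"
proof -
  obtain c where nonzero: "\<exists>j<Suc n. c j \<noteq> 0"
    and initial: "\<And>i. i < n \<Longrightarrow> (\<Sum>j<Suc n. hderiv i (\<phi> j) 0 * c j) = 0"
    using underdetermined_homogeneous_system[of n "Suc n" "\<lambda>i j. hderiv i (\<phi> j) 0"] by auto
  have "(\<Sum>j\<le>n. c j * \<phi> j x) = 0" for x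
  proof (rule ode_solution_zero_initial[OF \<open>1 \<le> n\<close> continuous ode_solution_sum])
    fix i assume "i < n"
    have "hderiv i (\<lambda>x. \<Sum>j\<le>n. c j * \<phi> j x) = (\<lambda>x. \<Sum>j\<le>n. c j * hderiv i (\<phi> j) x)"
      by (rule hderiv_sum[where m = n]) (use solutions \<open>i < n\<close> in \<open>auto simp: ode_solution_def\<close>)
    with initial[OF \<open>i < n\<close>] show "hderiv i (\<lambda>x. \<Sum>j\<le>n. c j * \<phi> j x) 0 = 0"
      by (simp add: lessThan_Suc_atMost mult.commute)
  qed (use solutions in auto)
  moreover have "\<exists>j\<le>n. c j \<noteq> 0"
    using nonzero by (simp add: less_Suc_eq_le)
  ultimately show ?thesis
    using that by blast
qed

lemma linear_recurrence_zero_nat: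
  fixes a c :: "nat \<Rightarrow> 'a::semiring_no_zero_divisors"
  assumes rec: "\<And>t. (\<Sum>j\<le>m. c j * a (t + j)) = 0" and nz: "\<exists>j\<le>m. c j \<noteq> 0"
    and init: "\<And>i. i < m \<Longrightarrow> a i = 0"
  shows "a i = 0"
proof (induction i rule: less_induct)
  case (less i)
  define J where "J = {j. j \<le> m \<and> c j \<noteq> 0}"
  define h where "h = Max J"
  have "finite J" and "J \<noteq> {}"
    using nz by (auto simp: J_def)
  then have "h \<in> J" and "\<And>j. j \<in> J \<Longrightarrow> j \<le> h"
    by (simp_all add: h_def)
  then have h: "h \<le> m" "c h \<noteq> 0" and above_h: "\<And>j. j \<le> m \<Longrightarrow> h < j \<Longrightarrow> c j = 0"
    by (auto simp: J_def not_le[symmetric])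
  show ?case
  proof (cases "i < m")
    case False
    have "(\<Sum>j\<le>m. c j * a (i - h + j)) = (\<Sum>j\<in>{h}. c j * a (i - h + j))"
    proof (rule sum.mono_neutral_right)
      show "\<forall>j\<in>{..m} - {h}. c j * a (i - h + j) = 0"
        using above_h less.IH False h(1) by (auto simp: nat_neq_iff)
    qed (use h(1) in auto)
    then show ?thesis
      using rec[of "i - h"] h False by simp
  qed (rule init)
qed

lemma linear_recurrence_zero:
  fixes a :: "int \<Rightarrow> 'a::semiring_no_zero_divisors" and c :: "nat \<Rightarrow> 'a"
  assumes rec: "\<And>t. (\<Sum>j\<le>m. c j * a (t + int j)) = 0" and nz: "\<exists>j\<le>m. c j \<noteq> 0"
    and init: "\<And>i. 0 \<le> i \<Longrightarrow> i < int m \<Longrightarrow> a i = 0"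
  shows "a i = 0"
proof -
  have forward: "a (int i) = 0" for i
    by (rule linear_recurrence_zero_nat[where a = "\<lambda>i. a (int i)"]) (use rec nz init in auto)
  have backward: "a (int m - 1 - int i) = 0" for i
  proof (rule linear_recurrence_zero_nat[where a = "\<lambda>i. a (int m - 1 - int i)" and c = "\<lambda>j. c (m - j)"])
    fix t
    have "(\<Sum>j\<le>m. c (m - j) * a (int m - 1 - int (t + j))) = (\<Sum>j\<le>m. c j * a (- 1 - int t + int j))"
      unfolding atMost_atLeast0
      by (subst sum.atLeastAtMost_rev) (auto intro!: sum.cong simp: of_nat_diff algebra_simps)
    then show "(\<Sum>j\<le>m. c (m - j) * a (int m - 1 - int (t + j))) = 0"
      using rec by simp
  next
    show "\<exists>j\<le>m. c (m - j) \<noteq> 0"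
      using nz by (metis diff_diff_cancel diff_le_self)
  qed (use init in auto)
  show ?thesis
  proof (cases "0 \<le> i")
    case True
    then show ?thesis using forward[of "nat i"] by simp
  next
    case False
    then show ?thesis using backward[of "nat (int m - 1 - i)"] by simp
  qed
qed

theorem corollary4:
  fixes n :: nat and b :: real and p :: "nat \<Rightarrow> real \<Rightarrow> complex"
    and \<psi> :: "real \<Rightarrow> complex" and lam :: complex
  assumes "n \<ge> 2" and "b > 0"
    and "\<And>k. k \<le> n - 2 \<Longrightarrow> smooth_fun (p k)"
    and "\<And>k x. k \<le> n - 2 \<Longrightarrow> p k (x + b) = p k x"
    and "k_times_differentiable n \<psi>"
    and "\<And>x. hderiv n \<psi> x + (\<Sum>k\<le>n - 2. p k x * hderiv k \<psi> x) = lam * \<psi> x"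
    and "\<And>j. j \<le> n - 1 \<Longrightarrow> \<psi> (real j * b) = 0"
    and "\<exists>x. \<psi> x \<noteq> 0"
  shows "\<forall>k::int. \<psi> (of_int k * b) = 0"
proof -
  have "1 \<le> n"
    using assms(1) by simp
  have continuous: "continuous_on UNIV (p k)" if "k \<le> n - 2" for k
    using assms(3)[OF that] by (intro k_times_differentiable_imp_continuous[of 0]) (simp add: smooth_fun_def)
  have translates: "ode_solution n p lam (\<lambda>x. \<psi> (x + real j * b))" for j
    using assms(4-6) by (intro ode_solution_translate) (auto simp: ode_solution_def periodic_multiple)
  obtain c where nonzero: "\<exists>j\<le>n. c j \<noteq> 0"
    and combination: "\<And>x. (\<Sum>j\<le>n. c j * \<psi> (x + real j * b)) = 0"
    using ode_solutions_linearly_dependent[where \<phi> = "\<lambda>j x. \<psi> (x + real j * b)",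
        OF \<open>1 \<le> n\<close> continuous translates] by blast
  have recurrence: "(\<Sum>j\<le>n. c j * \<psi> (of_int (t + int j) * b)) = 0" for t
    using combination[of "of_int t * b"] by (simp add: distrib_right)
  have window: "\<psi> (of_int i * b) = 0" if "0 \<le> i" "i < int n" for i
    using assms(7)[of "nat i"] that by simp
  show ?thesis
    using linear_recurrence_zero[where a = "\<lambda>i. \<psi> (of_int i * b)", OF recurrence nonzero window] by blast
qed

end
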